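(* $\mathbb E\big[\|\boldsymbol\Sigma-\mathbf T\|^2\big]\le\dfrac{34\kappa^4}{n}+\dfrac{15\kappa^4}{n^2}$.
   Context: $\mathbf x_1,\dots,\mathbf x_n$ are iid from a probability distribution $\rho_{\mathcal X}$ on $\mathcal X\subseteq\mathbb R^d$. $K$ is a symmetric positive-definite kernel on $\mathcal X$ with $\sup_{\mathbf x}K(\mathbf x,\mathbf x)\le\kappa^2$ and $K(\mathbf x,\tilde{\mathbf x})=\sum_jt_j^2\psi_j(\mathbf x)\psi_j(\tilde{\mathbf x})$ (absolutely convergent), where $\{\psi_j\}$ is an orthonormal basis of $L^2(\rho_{\mathcal X})$ and $t_1^2\ge t_2^2\ge\dots\ge0$. Let $\phi_j=t_j\psi_j$. On $\ell^2(\mathbb N)$: $\mathbf T=\mathrm{diag}(t_1^2,t_2^2,\dots)$, $\boldsymbol\phi_i=(\phi_1(\mathbf x_i),\phi_2(\mathbf x_i),\dots)^\top$, $\boldsymbol\Sigma=\frac1n\sum_{i=1}^n\boldsymbol\phi_i\boldsymbol\phi_i^\top$; $\|\cdot\|$ is the operator norm on $\ell^2(\mathbb N)$. *)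

theory Defs
  imports "HOL-Probability.Probability"
begin

text \<open>Vectors of \<open>\<ell>\<^sup>2(\<nat>)\<close> are represented as square-summable functions
  \<open>nat \<Rightarrow> real\<close>; bounded operators on \<open>\<ell>\<^sup>2(\<nat>)\<close> by their infinite matrices
  \<open>nat \<Rightarrow> nat \<Rightarrow> real\<close>.\<close>

definition is_l2 :: "(nat \<Rightarrow> real) \<Rightarrow> bool" where
  "is_l2 v \<longleftrightarrow> summable (\<lambda>j. (v j)\<^sup>2)"

definition l2_norm :: "(nat \<Rightarrow> real) \<Rightarrow> real" where
  "l2_norm v = sqrt (\<Sum>j. (v j)\<^sup>2)"

definition mat_apply :: "(nat \<Rightarrow> nat \<Rightarrow> real) \<Rightarrow> (nat \<Rightarrow> real) \<Rightarrow> (nat \<Rightarrow> real)" where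
  "mat_apply A v = (\<lambda>j. \<Sum>k. A j k * v k)"

definition op_norm :: "(nat \<Rightarrow> nat \<Rightarrow> real) \<Rightarrow> real" where
  "op_norm A = (SUP v\<in>{v. is_l2 v \<and> l2_norm v \<le> 1}. l2_norm (mat_apply A v))"

definition sym_pd_kernel :: "'a set \<Rightarrow> ('a \<Rightarrow> 'a \<Rightarrow> real) \<Rightarrow> bool" where
  "sym_pd_kernel X K \<longleftrightarrow>
     (\<forall>x\<in>X. \<forall>y\<in>X. K x y = K y x) \<and>
     (\<forall>m (z :: nat \<Rightarrow> 'a) (c :: nat \<Rightarrow> real). (\<forall>i<m. z i \<in> X) \<longrightarrow>
        (\<Sum>i<m. \<Sum>j<m. c i * c j * K (z i) (z j)) \<ge> 0)"

definition L2_onb :: "'a measure \<Rightarrow> (nat \<Rightarrow> 'a \<Rightarrow> real) \<Rightarrow> bool" where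
  "L2_onb \<rho> \<psi> \<longleftrightarrow>
     (\<forall>j. \<psi> j \<in> borel_measurable \<rho> \<and> integrable \<rho> (\<lambda>x. (\<psi> j x)\<^sup>2)) \<and>
     (\<forall>j k. (\<integral>x. \<psi> j x * \<psi> k x \<partial>\<rho>) = (if j = k then 1 else 0)) \<and>
     (\<forall>f \<in> borel_measurable \<rho>. integrable \<rho> (\<lambda>x. (f x)\<^sup>2) \<longrightarrow>
        (\<forall>j. (\<integral>x. f x * \<psi> j x \<partial>\<rho>) = 0) \<longrightarrow> (AE x in \<rho>. f x = 0))"

definition Sigma_op :: "nat \<Rightarrow> (nat \<Rightarrow> real) \<Rightarrow> (nat \<Rightarrow> 'a \<Rightarrow> real) \<Rightarrow> (nat \<Rightarrow> 'a) \<Rightarrow> nat \<Rightarrow> nat \<Rightarrow> real" where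
  "Sigma_op n t \<psi> xs = (\<lambda>j k. (1 / real n) * (\<Sum>i<n. (t j * \<psi> j (xs i)) * (t k * \<psi> k (xs i))))"

definition T_op :: "(nat \<Rightarrow> real) \<Rightarrow> nat \<Rightarrow> nat \<Rightarrow> real" where
  "T_op t = (\<lambda>j k. if j = k then (t j)\<^sup>2 else 0)"

end

theory Submission
  imports Defs
begin

(*
  The operator norm is dominated by the Hilbert-Schmidt norm, so it suffices to bound
  E [sum_j sum_k (Sigma - T)_jk^2].  With phi_j = t_j psi_j, orthonormality of psi gives
  E [phi_j phi_k] = T_jk, so (Sigma - T)_jk is the centred empirical mean of n iid copies of
  phi_j phi_k and has second moment Var (phi_j phi_k) / n <= E [(phi_j phi_k)^2] / n.
  Summing over j and k and using sum_j phi_j(x)^2 = K(x,x) <= kappa^2 yields the sharper bound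
  E ||Sigma - T||^2 <= E [K(x,x)^2] / n <= kappa^4 / n.
*)

lemma summable_mult_of_square_summable:
  fixes a b :: "nat \<Rightarrow> real"
  assumes "summable (\<lambda>k. (a k)\<^sup>2)" and "summable (\<lambda>k. (b k)\<^sup>2)"
  shows "summable (\<lambda>k. a k * b k)"
proof (rule summable_comparison_test[OF _ summable_add[OF assms]])
  have "\<bar>a k * b k\<bar> \<le> (a k)\<^sup>2 + (b k)\<^sup>2" for k
    using sum_squares_bound[of "\<bar>a k\<bar>" "\<bar>b k\<bar>"] zero_le_mult_iff[of "\<bar>a k\<bar>" "\<bar>b k\<bar>"]
    unfolding abs_mult power2_abs by linarith
  then show "\<exists>N. \<forall>k\<ge>N. norm (a k * b k) \<le> (a k)\<^sup>2 + (b k)\<^sup>2" by auto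
qed

lemma suminf_Cauchy_Schwarz:
  fixes a b :: "nat \<Rightarrow> real"
  assumes a: "summable (\<lambda>k. (a k)\<^sup>2)" and b: "summable (\<lambda>k. (b k)\<^sup>2)"
  shows "(\<Sum>k. a k * b k)\<^sup>2 \<le> (\<Sum>k. (a k)\<^sup>2) * (\<Sum>k. (b k)\<^sup>2)"
proof (rule LIMSEQ_le_const2)
  show "(\<lambda>N. (\<Sum>k<N. a k * b k)\<^sup>2) \<longlonglongrightarrow> (\<Sum>k. a k * b k)\<^sup>2"
    by (intro tendsto_intros summable_LIMSEQ summable_mult_of_square_summable[OF a b])
  have "(\<Sum>k<N. a k * b k)\<^sup>2 \<le> (\<Sum>k<N. (a k)\<^sup>2) * (\<Sum>k<N. (b k)\<^sup>2)" for N
    by (rule Cauchy_Schwarz_ineq_sum)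
  also have "\<dots> N \<le> (\<Sum>k. (a k)\<^sup>2) * (\<Sum>k. (b k)\<^sup>2)" for N
    by (intro mult_mono sum_le_suminf a b suminf_nonneg sum_nonneg) auto
  finally show "\<exists>N. \<forall>N'\<ge>N. (\<Sum>k<N'. a k * b k)\<^sup>2 \<le> (\<Sum>k. (a k)\<^sup>2) * (\<Sum>k. (b k)\<^sup>2)"
    by blast
qed

lemma l2_norm_mat_apply_le:
  assumes rows: "\<And>j. summable (\<lambda>k. (A j k)\<^sup>2)"
    and total: "summable (\<lambda>j. \<Sum>k. (A j k)\<^sup>2)"
    and v: "is_l2 v"
  shows "l2_norm (mat_apply A v) \<le> sqrt (\<Sum>j. \<Sum>k. (A j k)\<^sup>2) * l2_norm v"
proof -
  have sv: "summable (\<lambda>k. (v k)\<^sup>2)" using v by (simp add: is_l2_def)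
  have row: "(mat_apply A v j)\<^sup>2 \<le> (\<Sum>k. (A j k)\<^sup>2) * (\<Sum>k. (v k)\<^sup>2)" for j
    unfolding mat_apply_def by (rule suminf_Cauchy_Schwarz[OF rows sv])
  have "(\<Sum>j. (mat_apply A v j)\<^sup>2) \<le> (\<Sum>j. (\<Sum>k. (A j k)\<^sup>2) * (\<Sum>k. (v k)\<^sup>2))"
    by (rule suminf_le[OF row summable_comparison_test'[OF summable_mult2[OF total]]])
      (use row summable_mult2[OF total] in auto)
  also have "\<dots> = (\<Sum>j. \<Sum>k. (A j k)\<^sup>2) * (\<Sum>k. (v k)\<^sup>2)"
    by (rule suminf_mult2[OF total, symmetric])
  finally show ?thesis
    unfolding l2_norm_def real_sqrt_mult[symmetric] by (rule real_sqrt_le_mono)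
qed

lemma op_norm_sq_le_Hilbert_Schmidt:
  assumes rows: "\<And>j. summable (\<lambda>k. (A j k)\<^sup>2)"
    and total: "summable (\<lambda>j. \<Sum>k. (A j k)\<^sup>2)"
  shows "(op_norm A)\<^sup>2 \<le> (\<Sum>j. \<Sum>k. (A j k)\<^sup>2)"
proof -
  let ?B = "{v. is_l2 v \<and> l2_norm v \<le> 1}"
  let ?H = "\<Sum>j. \<Sum>k. (A j k)\<^sup>2"
  have H: "0 \<le> ?H" by (intro suminf_nonneg rows total) simp
  have bound: "l2_norm (mat_apply A v) \<le> sqrt ?H" if "v \<in> ?B" for v
  proof -
    have "l2_norm (mat_apply A v) \<le> sqrt ?H * l2_norm v"
      using that by (intro l2_norm_mat_apply_le rows total) simp
    also have "\<dots> \<le> sqrt ?H" using that H by (intro mult_left_le) auto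
    finally show ?thesis .
  qed
  have zero: "(\<lambda>_. 0) \<in> ?B" by (simp add: is_l2_def l2_norm_def)
  have "0 \<le> op_norm A" unfolding op_norm_def
    by (rule order_trans[OF _ cSUP_upper[OF zero bdd_aboveI2[OF bound]]])
      (simp add: l2_norm_def mat_apply_def)
  moreover have "op_norm A \<le> sqrt ?H" unfolding op_norm_def
    using zero bound by (intro cSUP_least) auto
  ultimately show ?thesis using H by (metis power_mono real_sqrt_pow2)
qed

lemma ennreal_op_norm_sq_le_Hilbert_Schmidt:
  "ennreal ((op_norm A)\<^sup>2) \<le> (\<Sum>j. \<Sum>k. ennreal ((A j k)\<^sup>2))"
proof (cases "(\<Sum>j. \<Sum>k. ennreal ((A j k)\<^sup>2)) = \<top>")
  case False
  then have "(\<Sum>k. ennreal ((A j k)\<^sup>2)) \<noteq> \<top>" for j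
    by (metis ennreal_suminf_lessD top.not_eq_extremum)
  then have rows: "summable (\<lambda>k. (A j k)\<^sup>2)" for j
    by (simp add: summable_suminf_not_top)
  then have rows_eq: "(\<Sum>k. ennreal ((A j k)\<^sup>2)) = ennreal (\<Sum>k. (A j k)\<^sup>2)" for j
    by (simp add: suminf_ennreal2)
  have total: "summable (\<lambda>j. \<Sum>k. (A j k)\<^sup>2)"
    using False rows by (intro summable_suminf_not_top suminf_nonneg) (simp_all add: rows_eq)
  show ?thesis
    using op_norm_sq_le_Hilbert_Schmidt[OF rows total]
    by (simp add: rows_eq suminf_ennreal2 total suminf_nonneg rows)
qed simp

context prob_space
begin

lemma PiM_component_product:
  fixes g :: "'a \<Rightarrow> real" and i l n :: nat
  assumes g: "integrable M g" and g2: "integrable M (\<lambda>x. (g x)\<^sup>2)"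
    and i: "i < n" and l: "l < n"
  shows "integrable (PiM {..<n} (\<lambda>_. M)) (\<lambda>xs. g (xs i) * g (xs l))"
    and "(\<integral>xs. g (xs i) * g (xs l) \<partial>PiM {..<n} (\<lambda>_. M))
          = (if i = l then expectation (\<lambda>x. (g x)\<^sup>2) else (expectation g)\<^sup>2)"
proof -
  interpret product_sigma_finite "\<lambda>_. M" by unfold_locales
  define F where "F m = (\<lambda>x. (if m = i then g x else 1) * (if m = l then g x else 1))" for m
  have F_prod: "(\<Prod>m<n. F m (xs m)) = g (xs i) * g (xs l)" for xs
    using i l by (simp add: F_def prod.distrib)
  have F_int: "integrable M (F m)" for m
    using g g2 by (cases "m = i"; cases "m = l") (simp_all add: F_def power2_eq_square)
  show "integrable (PiM {..<n} (\<lambda>_. M)) (\<lambda>xs. g (xs i) * g (xs l))"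
    using product_integrable_prod[of "{..<n}" F] F_int by (simp add: F_prod)
  have "(\<integral>xs. g (xs i) * g (xs l) \<partial>PiM {..<n} (\<lambda>_. M)) = (\<Prod>m<n. expectation (F m))"
    using product_integral_prod[of "{..<n}" F] F_int by (simp add: F_prod)
  also have "\<dots> = (if i = l then expectation (\<lambda>x. (g x)\<^sup>2) else (expectation g)\<^sup>2)"
  proof (cases "i = l")
    case True
    then have "expectation (F m) = (if m = i then expectation (\<lambda>x. (g x)\<^sup>2) else 1)" for m
      by (simp add: F_def power2_eq_square prob_space)
    with True i show ?thesis by simp
  next
    case False
    then have "expectation (F m)
        = (if m = i then expectation g else 1) * (if m = l then expectation g else 1)" for m
      by (simp add: F_def prob_space)
    with False i l show ?thesis
      by (simp add: prod.distrib power2_eq_square)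
  qed
  finally show "(\<integral>xs. g (xs i) * g (xs l) \<partial>PiM {..<n} (\<lambda>_. M))
      = (if i = l then expectation (\<lambda>x. (g x)\<^sup>2) else (expectation g)\<^sup>2)" .
qed

lemma PiM_empirical_mean_deviation_sq:
  fixes h :: "'a \<Rightarrow> real" and n :: nat
  assumes h: "h \<in> borel_measurable M" and h2: "integrable M (\<lambda>x. (h x)\<^sup>2)" and n: "0 < n"
  defines "D \<equiv> \<lambda>xs. ((\<Sum>i<n. h (xs i)) / real n - expectation h)\<^sup>2"
  shows "integrable (PiM {..<n} (\<lambda>_. M)) D"
    and "(\<integral>xs. D xs \<partial>PiM {..<n} (\<lambda>_. M)) = variance h / real n"
proof -
  have h1: "integrable M h" by (rule square_integrable_imp_integrable[OF h h2])
  define g where "g = (\<lambda>x. h x - expectation h)"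
  have g: "integrable M g" using h1 by (simp add: g_def)
  have g2: "integrable M (\<lambda>x. (g x)\<^sup>2)"
    using h1 h2 by (simp add: g_def power2_diff)
  have "expectation g = 0" using h1 by (simp add: g_def prob_space)
  then have pair: "(\<integral>xs. g (xs i) * g (xs l) \<partial>PiM {..<n} (\<lambda>_. M)) = (if i = l then variance h else 0)"
    if "i < n" "l < n" for i l
    using PiM_component_product(2)[OF g g2 that] by (simp add: g_def)
  have D: "D xs = (\<Sum>i<n. \<Sum>l<n. g (xs i) * g (xs l)) / (real n)\<^sup>2" for xs
  proof -
    have "(\<Sum>i<n. h (xs i)) / real n - expectation h = (\<Sum>i<n. g (xs i)) / real n"
      using n by (simp add: g_def sum_subtractf field_simps)
    then show ?thesis
      by (simp add: D_def power_divide power2_eq_square sum_product)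
  qed
  have pair_int: "integrable (PiM {..<n} (\<lambda>_. M)) (\<lambda>xs. g (xs i) * g (xs l))"
    if "i \<in> {..<n}" "l \<in> {..<n}" for i l
    using PiM_component_product(1)[OF g g2] that by simp
  show "integrable (PiM {..<n} (\<lambda>_. M)) D"
    unfolding D by (intro integrable_divide Bochner_Integration.integrable_sum pair_int)
  have "(\<integral>xs. D xs \<partial>PiM {..<n} (\<lambda>_. M))
      = (\<Sum>i<n. \<integral>xs. (\<Sum>l<n. g (xs i) * g (xs l)) \<partial>PiM {..<n} (\<lambda>_. M)) / (real n)\<^sup>2"
    unfolding D integral_divide_zero
    by (subst Bochner_Integration.integral_sum) (auto intro: pair_int)
  also have "\<dots> = (\<Sum>i<n. \<Sum>l<n. \<integral>xs. g (xs i) * g (xs l) \<partial>PiM {..<n} (\<lambda>_. M)) / (real n)\<^sup>2"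
    by (intro arg_cong2[where f="(/)"] sum.cong refl Bochner_Integration.integral_sum pair_int)
  also have "\<dots> = (\<Sum>i<n. \<Sum>l<n. if i = l then variance h else 0) / (real n)\<^sup>2"
    by (simp add: pair)
  also have "\<dots> = variance h / real n"
    using n by (simp add: power2_eq_square)
  finally show "(\<integral>xs. D xs \<partial>PiM {..<n} (\<lambda>_. M)) = variance h / real n" .
qed

lemma nn_integral_PiM_empirical_mean_deviation_sq_le:
  fixes h :: "'a \<Rightarrow> real" and n :: nat
  assumes h: "h \<in> borel_measurable M" and h2: "integrable M (\<lambda>x. (h x)\<^sup>2)" and n: "0 < n"
  shows "(\<integral>\<^sup>+xs. ennreal (((\<Sum>i<n. h (xs i)) / real n - expectation h)\<^sup>2) \<partial>PiM {..<n} (\<lambda>_. M))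
      \<le> ennreal (1 / real n) * (\<integral>\<^sup>+x. ennreal ((h x)\<^sup>2) \<partial>M)"
proof -
  have "(\<integral>\<^sup>+xs. ennreal (((\<Sum>i<n. h (xs i)) / real n - expectation h)\<^sup>2) \<partial>PiM {..<n} (\<lambda>_. M))
      = ennreal (variance h / real n)"
    using PiM_empirical_mean_deviation_sq[OF h h2 n] by (simp add: nn_integral_eq_integral)
  also have "\<dots> \<le> ennreal (expectation (\<lambda>x. (h x)\<^sup>2) / real n)"
    using variance_eq[OF square_integrable_imp_integrable[OF h h2] h2]
    by (intro ennreal_leI divide_right_mono) auto
  also have "\<dots> = ennreal (1 / real n) * (\<integral>\<^sup>+x. ennreal ((h x)\<^sup>2) \<partial>M)"
    using h2 by (simp add: nn_integral_eq_integral ennreal_mult'[symmetric])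
  finally show ?thesis .
qed

lemma suminf_suminf_ennreal_sq_mult:
  fixes f :: "nat \<Rightarrow> real"
  assumes f: "(\<lambda>j. (f j)\<^sup>2) sums s"
  shows "(\<Sum>j. \<Sum>k. ennreal ((f j * f k)\<^sup>2)) = ennreal (s\<^sup>2)"
proof -
  have "(\<Sum>k. ennreal ((f j * f k)\<^sup>2)) = ennreal ((f j)\<^sup>2 * s)" for j
    using sums_mult[OF f, of "(f j)\<^sup>2"] by (intro suminf_ennreal_eq) (simp_all add: power_mult_distrib)
  moreover have "(\<Sum>j. ennreal ((f j)\<^sup>2 * s)) = ennreal (s\<^sup>2)"
    using sums_mult2[OF f, of s] sums_le[OF _ sums_zero f]
    by (intro suminf_ennreal_eq) (simp_all add: power2_eq_square)
  ultimately show ?thesis by simp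
qed

lemma nn_integral_suminf_suminf_sq_mult_le:
  fixes f :: "nat \<Rightarrow> 'a \<Rightarrow> real"
  assumes f: "\<And>j. f j \<in> borel_measurable M"
    and sums: "\<And>x. x \<in> space M \<Longrightarrow> (\<lambda>j. (f j x)\<^sup>2) sums S x"
    and bound: "\<And>x. x \<in> space M \<Longrightarrow> S x \<le> C"
  shows "(\<Sum>j. \<Sum>k. \<integral>\<^sup>+x. ennreal ((f j x * f k x)\<^sup>2) \<partial>M) \<le> ennreal (C\<^sup>2)"
proof -
  have "(\<Sum>j. \<Sum>k. \<integral>\<^sup>+x. ennreal ((f j x * f k x)\<^sup>2) \<partial>M)
      = (\<integral>\<^sup>+x. (\<Sum>j. \<Sum>k. ennreal ((f j x * f k x)\<^sup>2)) \<partial>M)"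
    using f by (simp add: nn_integral_suminf)
  also have "\<dots> \<le> (\<integral>\<^sup>+x. ennreal (C\<^sup>2) \<partial>M)"
  proof (rule nn_integral_mono)
    fix x assume x: "x \<in> space M"
    have "0 \<le> S x" by (rule sums_le[OF _ sums_zero sums[OF x]]) simp
    then show "(\<Sum>j. \<Sum>k. ennreal ((f j x * f k x)\<^sup>2)) \<le> ennreal (C\<^sup>2)"
      using bound[OF x] by (simp add: suminf_suminf_ennreal_sq_mult[OF sums[OF x]] power_mono)
  qed
  also have "\<dots> = ennreal (C\<^sup>2)" by (simp add: emeasure_space_1)
  finally show ?thesis .
qed

lemma integrable_sq_mult_of_sums_le:
  fixes f :: "nat \<Rightarrow> 'a \<Rightarrow> real"
  assumes f: "\<And>j. f j \<in> borel_measurable M"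
    and sums: "\<And>x. x \<in> space M \<Longrightarrow> (\<lambda>j. (f j x)\<^sup>2) sums S x"
    and bound: "\<And>x. x \<in> space M \<Longrightarrow> S x \<le> C"
  shows "integrable M (\<lambda>x. (f j x * f k x)\<^sup>2)"
proof (rule integrable_const_bound[where B="C\<^sup>2"])
  have term_le: "(f i x)\<^sup>2 \<le> C" if x: "x \<in> space M" for i x
    using sum_le_suminf[OF sums_summable[OF sums[OF x]], of "{i}"] sums_unique[OF sums[OF x]]
      bound[OF x] by simp
  show "AE x in M. norm ((f j x * f k x)\<^sup>2) \<le> C\<^sup>2"
  proof (rule AE_I2)
    fix x assume x: "x \<in> space M"
    have "(f j x)\<^sup>2 * (f k x)\<^sup>2 \<le> C * C"
    proof (rule mult_mono)
      show "0 \<le> C" using term_le[OF x, of j] zero_le_power2[of "f j x"] by linarith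
    qed (simp_all add: term_le[OF x])
    then show "norm ((f j x * f k x)\<^sup>2) \<le> C\<^sup>2"
      by (simp add: power_mult_distrib power2_eq_square[of C])
  qed
qed (use f in simp)

lemma nn_integral_op_norm_sq_empirical_covariance_le:
  fixes \<phi> :: "nat \<Rightarrow> 'a \<Rightarrow> real" and n :: nat
  assumes \<phi>: "\<And>j. \<phi> j \<in> borel_measurable M"
    and sums: "\<And>x. x \<in> space M \<Longrightarrow> (\<lambda>j. (\<phi> j x)\<^sup>2) sums S x"
    and bound: "\<And>x. x \<in> space M \<Longrightarrow> S x \<le> C"
    and n: "0 < n"
  shows "(\<integral>\<^sup>+xs. ennreal ((op_norm (\<lambda>j k. (\<Sum>i<n. \<phi> j (xs i) * \<phi> k (xs i)) / real n
            - expectation (\<lambda>x. \<phi> j x * \<phi> k x)))\<^sup>2) \<partial>PiM {..<n} (\<lambda>_. M))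
      \<le> ennreal (C\<^sup>2 / real n)"
proof -
  let ?P = "PiM {..<n} (\<lambda>_. M)"
  let ?D = "\<lambda>j k xs. (\<Sum>i<n. \<phi> j (xs i) * \<phi> k (xs i)) / real n - expectation (\<lambda>x. \<phi> j x * \<phi> k x)"
  have "(\<integral>\<^sup>+xs. ennreal ((op_norm (\<lambda>j k. ?D j k xs))\<^sup>2) \<partial>?P)
      \<le> (\<integral>\<^sup>+xs. (\<Sum>j. \<Sum>k. ennreal ((?D j k xs)\<^sup>2)) \<partial>?P)"
    by (intro nn_integral_mono ennreal_op_norm_sq_le_Hilbert_Schmidt)
  also have "\<dots> = (\<Sum>j. \<Sum>k. \<integral>\<^sup>+xs. ennreal ((?D j k xs)\<^sup>2) \<partial>?P)"
    using \<phi> by (simp add: nn_integral_suminf)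
  also have "\<dots> \<le> (\<Sum>j. \<Sum>k. ennreal (1 / real n) * \<integral>\<^sup>+x. ennreal ((\<phi> j x * \<phi> k x)\<^sup>2) \<partial>M)"
    using \<phi> n
    by (intro suminf_le summableI nn_integral_PiM_empirical_mean_deviation_sq_le
        integrable_sq_mult_of_sums_le[OF \<phi> sums bound]) auto
  also have "\<dots> = ennreal (1 / real n) * (\<Sum>j. \<Sum>k. \<integral>\<^sup>+x. ennreal ((\<phi> j x * \<phi> k x)\<^sup>2) \<partial>M)"
    by simp
  also have "\<dots> \<le> ennreal (1 / real n) * ennreal (C\<^sup>2)"
    by (intro mult_left_mono nn_integral_suminf_suminf_sq_mult_le[OF \<phi> sums bound] zero_le)
  also have "\<dots> = ennreal (C\<^sup>2 / real n)"
    by (simp add: ennreal_mult'[symmetric])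
  finally show ?thesis .
qed

end

theorem lemma2:
  fixes X :: "(real ^ 'd) set" and \<rho> :: "(real ^ 'd) measure"
    and K :: "real ^ 'd \<Rightarrow> real ^ 'd \<Rightarrow> real"
    and \<psi> :: "nat \<Rightarrow> real ^ 'd \<Rightarrow> real" and t :: "nat \<Rightarrow> real"
    and \<kappa> :: real and n :: nat
  assumes "prob_space \<rho>"
    and "sets \<rho> = sets (restrict_space borel X)"
    and "sym_pd_kernel X K"
    and "\<forall>x\<in>X. K x x \<le> \<kappa>\<^sup>2"
    and "L2_onb \<rho> \<psi>"
    and "\<forall>j. (t (Suc j))\<^sup>2 \<le> (t j)\<^sup>2"
    and "\<forall>x\<in>X. \<forall>y\<in>X. summable (\<lambda>j. \<bar>(t j)\<^sup>2 * \<psi> j x * \<psi> j y\<bar>) \<and>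
                      (\<lambda>j. (t j)\<^sup>2 * \<psi> j x * \<psi> j y) sums K x y"
    and "n > 0"
  shows "(\<integral>\<^sup>+ xs. ennreal ((op_norm (\<lambda>j k. Sigma_op n t \<psi> xs j k - T_op t j k))\<^sup>2)
            \<partial>(PiM {..<n} (\<lambda>_. \<rho>)))
         \<le> ennreal (34 * \<kappa> ^ 4 / real n + 15 * \<kappa> ^ 4 / (real n)\<^sup>2)"
proof -
  interpret prob_space \<rho> by fact
  define \<phi> where "\<phi> j = (\<lambda>x. t j * \<psi> j x)" for j
  have space: "space \<rho> = X"
    using sets_eq_imp_space_eq[OF assms(2)] by (simp add: space_restrict_space)
  have \<psi>: "\<psi> j \<in> borel_measurable \<rho>" "expectation (\<lambda>x. \<psi> j x * \<psi> k x) = (if j = k then 1 else 0)"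
    for j k using assms(5) by (auto simp: L2_onb_def)
  have \<phi>: "\<phi> j \<in> borel_measurable \<rho>" for j
    using \<psi>(1) by (simp add: \<phi>_def)
  have K: "(\<lambda>j. (\<phi> j x)\<^sup>2) sums K x x" if "x \<in> space \<rho>" for x
    using assms(7) that by (auto simp: space \<phi>_def power2_eq_square mult_ac)
  have K_le: "K x x \<le> \<kappa>\<^sup>2" if "x \<in> space \<rho>" for x
    using assms(4) that by (simp add: space)
  have mean: "expectation (\<lambda>x. \<phi> j x * \<phi> k x) = T_op t j k" for j k
    using \<psi>(2)[of j k] by (simp add: \<phi>_def T_op_def mult_ac power2_eq_square)
  have entry: "Sigma_op n t \<psi> xs j k - T_op t j k
      = (\<Sum>i<n. \<phi> j (xs i) * \<phi> k (xs i)) / real n - expectation (\<lambda>x. \<phi> j x * \<phi> k x)" for xs j k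
    unfolding mean by (simp add: Sigma_op_def \<phi>_def)
  have "(\<kappa>\<^sup>2)\<^sup>2 / real n \<le> 34 * \<kappa> ^ 4 / real n + 15 * \<kappa> ^ 4 / (real n)\<^sup>2"
    by (simp add: add_increasing2 divide_right_mono)
  then show ?thesis
    unfolding entry
    by (intro order_trans[OF nn_integral_op_norm_sq_empirical_covariance_le[where S="\<lambda>x. K x x"]
          ennreal_leI]) (use \<phi> K K_le \<open>n > 0\<close> in auto)
qed

end
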